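(* Let $r, d, m_1, \ldots, m_r$ be positive integers such that $r \geq 4$ and $m_1 + \ldots + m_r = d$. For each $1 \leq i \leq d-1$ define the integer $\lambda(i)$ by $$\overline{i m_1} + \ldots + \overline{i m_r} = \lambda(i)\, d,$$ where for an integer $z$, $\overline{z}\in\{0,\dots,d-1\}$ denotes the remainder of $z$ modulo $d$. Then $$\#\{ i \in \{1,\dots,d-1\} : \lambda(i) = 1 \} < \frac{d-1}{2}.$$ *)

theory Defs
  imports Complex_Main
begin

text \<open>lambda(i): the integer with  sum_k ((i * m_k) mod d) = lambda(i) * d.
  Since sum_k m_k = d, the sum is divisible by d, so this is an exact quotient.\<close>
definition lam :: "nat \<Rightarrow> nat \<Rightarrow> (nat \<Rightarrow> nat) \<Rightarrow> nat \<Rightarrow> nat" where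
  "lam r d m i = (\<Sum>k=1..r. (i * m k) mod d) div d"

end

theory Submission
  imports Defs
begin

text \<open>Since \<open>\<Sum>\<^sub>k m\<^sub>k = d\<close>, one has \<open>\<lambda>(i) = i - \<Sum>\<^sub>k \<lfloor>i m\<^sub>k / d\<rfloor>\<close>. For \<open>s + t = d - 1\<close>
  each \<open>\<lfloor>s m\<^sub>k / d\<rfloor> + \<lfloor>t m\<^sub>k / d\<rfloor> \<le> \<lfloor>(d - 1) m\<^sub>k / d\<rfloor> \<le> m\<^sub>k - 1\<close>, hence
  \<open>\<lambda>(s) + \<lambda>(t) \<ge> r - 1 \<ge> 3\<close>. In particular \<open>\<lambda>(d - 1) \<ge> 3\<close>, and the involution
  \<open>s \<mapsto> d - 1 - s\<close> of \<open>{1..d-2}\<close> maps the set \<open>{\<lambda> = 1}\<close> into its complement, so that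
  set has at most \<open>(d - 2) / 2\<close> elements.\<close>

lemma sum_mult_mod_add_div:
  fixes m :: "'a \<Rightarrow> nat"
  assumes "(\<Sum>k\<in>K. m k) = d"
  shows "(\<Sum>k\<in>K. i * m k mod d) + d * (\<Sum>k\<in>K. i * m k div d) = i * d"
proof -
  have "(\<Sum>k\<in>K. i * m k mod d) + d * (\<Sum>k\<in>K. i * m k div d)
      = (\<Sum>k\<in>K. i * m k mod d + d * (i * m k div d))"
    by (simp only: sum.distrib sum_distrib_left)
  also have "\<dots> = i * (\<Sum>k\<in>K. m k)"
    by (simp add: sum_distrib_left)
  finally show ?thesis
    using assms by simp
qed

lemma lam_eq_diff_sum_div:
  assumes "d > 0" and "(\<Sum>k=1..r. m k) = d"
  shows "lam r d m i = i - (\<Sum>k=1..r. i * m k div d)"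
proof -
  let ?F = "\<Sum>k=1..r. i * m k div d"
  have "(\<Sum>k=1..r. i * m k mod d) = d * (i - ?F)"
    using sum_mult_mod_add_div[OF assms(2), of i] by (simp add: diff_mult_distrib2 mult.commute)
  then show ?thesis
    using assms(1) by (simp add: lam_def)
qed

lemma div_add_div_complement_less:
  fixes s t d m :: nat
  assumes "d > 0" and "m > 0" and "s + t = d - 1"
  shows "s * m div d + t * m div d < m"
proof -
  have "s * m div d + t * m div d \<le> (s * m + t * m) div d"
    using div_add1_eq[of "s * m" "t * m" d] by linarith
  also have "s * m + t * m = (d - 1) * m"
    using assms(3) by (metis add_mult_distrib)
  also have "(d - 1) * m div d < m"
    using assms(1,2) by (simp add: div_less_iff_less_mult)
  finally show ?thesis .
qed

lemma lam_add_complement_ge: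
  assumes "d > 0" and pos: "\<And>k. k \<in> {1..r} \<Longrightarrow> m k > 0"
    and sum_m: "(\<Sum>k=1..r. m k) = d" and "s + t = d - 1"
  shows "lam r d m s + lam r d m t \<ge> r - 1"
proof -
  have "s * m k div d + t * m k div d + 1 \<le> m k" if "k \<in> {1..r}" for k
    using div_add_div_complement_less[OF assms(1) pos[OF that] assms(4)] by linarith
  then have "(\<Sum>k=1..r. s * m k div d + t * m k div d + 1) \<le> (\<Sum>k=1..r. m k)"
    by (rule sum_mono)
  then have "(\<Sum>k=1..r. s * m k div d) + (\<Sum>k=1..r. t * m k div d) + r \<le> (\<Sum>k=1..r. m k)"
    by (simp only: sum.distrib) simp
  then show ?thesis
    using sum_m assms(4) by (simp add: lam_eq_diff_sum_div[OF assms(1) sum_m])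
qed

lemma two_card_le_card_if_disjoint_image:
  assumes "finite A" and "S \<subseteq> A" and "f ` S \<subseteq> A"
    and "inj_on f S" and "S \<inter> f ` S = {}"
  shows "2 * card S \<le> card A"
proof -
  have "card S + card (f ` S) = card (S \<union> f ` S)"
    using assms by (metis card_Un_disjoint finite_subset)
  also have "\<dots> \<le> card A"
    using assms by (intro card_mono) auto
  finally show ?thesis
    using assms(4) by (simp add: card_image)
qed

theorem lemma4p6:
  fixes r d :: nat and m :: "nat \<Rightarrow> nat"
  assumes "r \<ge> 4" and "d > 0"
    and "\<And>k. k \<in> {1..r} \<Longrightarrow> m k > 0"
    and "(\<Sum>k=1..r. m k) = d"
  shows "real (card {i \<in> {1..d-1}. lam r d m i = 1}) < (real d - 1) / 2"
proof -
  define S where "S = {i \<in> {1..d-1}. lam r d m i = 1}"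
  define f where "f i = d - 1 - i" for i
  have lam_complement_ge_3: "lam r d m i + lam r d m (f i) \<ge> 3" if "i \<le> d - 1" for i
  proof -
    have "i + f i = d - 1"
      using that by (simp add: f_def)
    then show ?thesis
      using lam_add_complement_ge[OF assms(2-4)] assms(1) by fastforce
  qed
  have "r \<le> d"
    using sum_mono[of "{1..r}" "\<lambda>_. 1" m] assms(3,4) by force
  have "lam r d m (d - 1) \<ge> 3"
    using lam_complement_ge_3[of 0] by (simp add: f_def lam_def)
  then have "S \<subseteq> {1..d-2}"
    unfolding S_def by (auto simp: le_eq_less_or_eq)
  moreover have "S \<inter> f ` S = {}"
  proof -
    have "f i \<notin> S" if "i \<in> S" for i
      using lam_complement_ge_3[of i] that unfolding S_def by auto
    then show ?thesis
      by blast
  qed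
  moreover have "f ` S \<subseteq> {1..d-2}" and "inj_on f S"
    using \<open>S \<subseteq> {1..d-2}\<close> by (force simp: f_def inj_on_def)+
  ultimately have "2 * card S \<le> d - 2"
    using two_card_le_card_if_disjoint_image[of "{1..d-2}"] by fastforce
  then have "2 * real (card S) + 2 \<le> real d"
    using \<open>r \<le> d\<close> assms(1) by linarith
  then show ?thesis
    unfolding S_def by (simp add: field_simps)
qed

end
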